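(* Consider the APT–DIFT game described in the context and suppose the information flow graph $\mathcal G$ is acyclic, with $N$ nodes. Then, under any strategy pair $(p_A,p_D)$, the state space of the APT–DIFT game is acyclic (the directed graph on $\mathbf S$ having an edge $s\to s'$ whenever $P(s,a,d,s')>0$ for some $a\in\mathcal A_A(s)$, $d\in\mathcal A_D(s)$ has no directed cycle), and the game terminates in at most $N+4$ steps, i.e. $T\le N+4$.
   Context: Let $\mathcal G=(V_{\mathcal G},E_{\mathcal G})$ be a finite directed graph (the information flow graph) with $V_{\mathcal G}=\{v_1,\dots,v_N\}$, let $\lambda\subset V_{\mathcal G}$ be a set of entry points and $\mathcal D=\{v_1,\dots,v_q\}\subset V_{\mathcal G}$ a destination set, $FN,FP:V_{\mathcal G}\to(0,1)$ and $\beta>0$. The APT–DIFT game is a two-player stochastic game with state space $\mathbf S=\{v_0,v_1,\dots,v_N,\phi,\tau_A,\tau_B\}$ and initial state $v_0$; the states in $\{\phi,\tau_A,\tau_B\}\cup\mathcal D$ are absorbing with empty action sets, and the game terminates (at time $T$) when an absorbing state is reached. At $v_0$: $\mathcal A_A(v_0)=\lambda$, $\mathcal A_D(v_0)=\{0\}$. At a non-absorbing $s=v_i\in V_{\mathcal G}$: $\mathcal A_A(s)=\{\phi\}\cup\{v_j:(v_i,v_j)\in E_{\mathcal G}\}$, $\mathcal A_D(s)=\{0\}\cup\{v_j:(v_i,v_j)\in E_{\mathcal G}\}$. Transition probabilities $P(s,a,d,s')$: if $d=0$, $s'=a$ with probability $1$; if $d=a$, $s'=a$ with probability $FN(d)$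 and $s'=\tau_A$ with probability $1-FN(d)$; if $d\ne0$ and $d\neq a$, $s'=\tau_B$ with probability $FP(d)$ and $s'=a$ with probability $1-FP(d)$. Strategies are stationary mixed strategies assigning to each non-absorbing state a distribution over the player's actions there. *)

theory Defs
  imports "HOL-Probability.Probability_Mass_Function"
begin

datatype 'v gstate = V0 | Node 'v | Phi | TauA | TauB

definition state_space :: "'v set \<Rightarrow> 'v gstate set" where
  "state_space V = {V0, Phi, TauA, TauB} \<union> Node ` V"

definition absorbing :: "'v set \<Rightarrow> 'v gstate \<Rightarrow> bool" where
  "absorbing D s \<longleftrightarrow> s \<in> {Phi, TauA, TauB} \<union> Node ` D"

text \<open>Attacker action sets (actions are target states: phi or a successor node).\<close>
definition act_A :: "('v \<times> 'v) set \<Rightarrow> 'v set \<Rightarrow> 'v set \<Rightarrow> 'v gstate \<Rightarrow> 'v gstate set" where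
  "act_A E lam D s = (if absorbing D s then {} else
     (case s of V0 \<Rightarrow> Node ` lam
              | Node v \<Rightarrow> insert Phi {Node w | w. (v, w) \<in> E}
              | _ \<Rightarrow> {}))"

text \<open>Defender action sets: None encodes the action 0, Some w encodes tagging node w.\<close>
definition act_D :: "('v \<times> 'v) set \<Rightarrow> 'v set \<Rightarrow> 'v gstate \<Rightarrow> 'v option set" where
  "act_D E D s = (if absorbing D s then {} else
     (case s of V0 \<Rightarrow> {None}
              | Node v \<Rightarrow> insert None {Some w | w. (v, w) \<in> E}
              | _ \<Rightarrow> {}))"

definition trans_prob :: "('v \<Rightarrow> real) \<Rightarrow> ('v \<Rightarrow> real) \<Rightarrow>
    'v gstate \<Rightarrow> 'v gstate \<Rightarrow> 'v option \<Rightarrow> 'v gstate \<Rightarrow> real" where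
  "trans_prob FN FP s a d s' = (case d of
      None \<Rightarrow> (if s' = a then 1 else 0)
    | Some dv \<Rightarrow>
        (if Node dv = a then
           (if s' = a then FN dv else 0) + (if s' = TauA then 1 - FN dv else 0)
         else
           (if s' = TauB then FP dv else 0) + (if s' = a then 1 - FP dv else 0)))"

definition state_graph :: "'v set \<Rightarrow> ('v \<times> 'v) set \<Rightarrow> 'v set \<Rightarrow> 'v set \<Rightarrow>
    ('v \<Rightarrow> real) \<Rightarrow> ('v \<Rightarrow> real) \<Rightarrow> ('v gstate \<times> 'v gstate) set" where
  "state_graph V E lam D FN FP =
     {(s, s'). s \<in> state_space V \<and> s' \<in> state_space V \<and>
        (\<exists>a \<in> act_A E lam D s. \<exists>d \<in> act_D E D s. trans_prob FN FP s a d s' > 0)}"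

definition valid_strategies :: "'v set \<Rightarrow> ('v \<times> 'v) set \<Rightarrow> 'v set \<Rightarrow> 'v set \<Rightarrow>
    ('v gstate \<Rightarrow> 'v gstate pmf) \<Rightarrow> ('v gstate \<Rightarrow> 'v option pmf) \<Rightarrow> bool" where
  "valid_strategies V E lam D pA pD \<longleftrightarrow>
     (\<forall>s \<in> state_space V. \<not> absorbing D s \<longrightarrow>
        set_pmf (pA s) \<subseteq> act_A E lam D s \<and> set_pmf (pD s) \<subseteq> act_D E D s)"

definition is_play :: "'v set \<Rightarrow> ('v \<Rightarrow> real) \<Rightarrow> ('v \<Rightarrow> real) \<Rightarrow>
    ('v gstate \<Rightarrow> 'v gstate pmf) \<Rightarrow> ('v gstate \<Rightarrow> 'v option pmf) \<Rightarrow> (nat \<Rightarrow> 'v gstate) \<Rightarrow> bool" where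
  "is_play D FN FP pA pD traj \<longleftrightarrow> traj 0 = V0 \<and>
     (\<forall>k. (\<not> absorbing D (traj k) \<longrightarrow>
            (\<exists>a \<in> set_pmf (pA (traj k)). \<exists>d \<in> set_pmf (pD (traj k)).
               trans_prob FN FP (traj k) a d (traj (Suc k)) > 0)) \<and>
          (absorbing D (traj k) \<longrightarrow> traj (Suc k) = traj k))"

definition term_time :: "'v set \<Rightarrow> (nat \<Rightarrow> 'v gstate) \<Rightarrow> nat" where
  "term_time D traj = (LEAST k. absorbing D (traj k))"

end

theory Submission
  imports Defs
begin

text \<open>Every edge of the state graph leaves v0, enters one of the states phi, tau_A, tau_B
  from a node, or follows an edge of the information flow graph; since v0 has no incoming
  and phi, tau_A, tau_B no outgoing edges, a cycle can only live on the nodes, where it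
  would be a cycle of the information flow graph. Along a play every non-absorbing step is
  an edge of the acyclic state graph, so the states visited before absorption are pairwise
  distinct non-absorbing states, of which there are at most N + 1.\<close>

definition skeleton :: "('v \<times> 'v) set \<Rightarrow> ('v gstate \<times> 'v gstate) set" where
  "skeleton E = {V0} \<times> - {V0} \<union> range Node \<times> {Phi, TauA, TauB} \<union> map_prod Node Node ` E"

lemma trancl_skeleton_subset: "(skeleton E)\<^sup>+ \<subseteq> skeleton (E\<^sup>+)"
proof (rule subrelI)
  fix s t assume "(s, t) \<in> (skeleton E)\<^sup>+"
  then show "(s, t) \<in> skeleton (E\<^sup>+)"
    by (induction rule: trancl_induct) (auto simp: skeleton_def intro: trancl_into_trancl)
qed

lemma acyclic_skeleton: "acyclic E \<Longrightarrow> acyclic (skeleton E)"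
  using trancl_skeleton_subset by (fastforce simp: acyclic_def skeleton_def)

lemma trans_prob_pos_target:
  assumes "trans_prob FN FP s a d t > 0"
  shows "t = a \<or> t = TauA \<or> t = TauB"
  using assms unfolding trans_prob_def by (auto split: option.splits if_splits)

lemma state_graph_subset_skeleton: "state_graph V E lam D FN FP \<subseteq> skeleton E"
proof (rule subrelI)
  fix s t assume "(s, t) \<in> state_graph V E lam D FN FP"
  then obtain a d where a: "a \<in> act_A E lam D s"
    and d: "d \<in> act_D E D s" and pos: "trans_prob FN FP s a d t > 0"
    unfolding state_graph_def by auto
  show "(s, t) \<in> skeleton E"
  proof (cases s)
    case V0
    then have "d = None" using d by (auto simp: act_D_def split: if_splits)
    then have "t = a" using pos by (auto simp: trans_prob_def split: if_splits)
    then show ?thesis using V0 a by (auto simp: act_A_def skeleton_def split: if_splits)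
  next
    case (Node v)
    then show ?thesis using a trans_prob_pos_target[OF pos]
      by (auto simp: act_A_def skeleton_def split: if_splits)
  qed (use a in \<open>auto simp: act_A_def absorbing_def\<close>)
qed

lemma acyclic_state_graph: "acyclic E \<Longrightarrow> acyclic (state_graph V E lam D FN FP)"
  using acyclic_subset[OF acyclic_skeleton state_graph_subset_skeleton] .

lemma trancl_of_walk:
  assumes "\<forall>k < n. (f k, f (Suc k)) \<in> R" and "i < j" and "j \<le> n"
  shows "(f i, f j) \<in> R\<^sup>+"
  using assms(2,3)
proof (induction j)
  case (Suc j)
  then show ?case using assms(1)
    by (cases "i = j") (auto intro: trancl_into_trancl)
qed simp

lemma inj_on_walk_if_acyclic:
  assumes "acyclic R" and "\<forall>k < n. (f k, f (Suc k)) \<in> R"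
  shows "inj_on f {..n}"
proof (rule inj_onI)
  have no_return: "f i \<noteq> f j" if "i < j" "j \<le> n" for i j
    using trancl_of_walk[OF assms(2) that] assms(1) by (auto simp: acyclic_def)
  fix i j assume "i \<in> {..n}" "j \<in> {..n}" "f i = f j"
  then show "i = j" using no_return no_return[of j i] by (cases i j rule: linorder_cases) auto
qed

lemma act_A_subset_state_space:
  assumes "lam \<subseteq> V" and "E \<subseteq> V \<times> V"
  shows "act_A E lam D s \<subseteq> state_space V"
  using assms unfolding act_A_def state_space_def by (auto split: gstate.splits)

lemma play_step_in_state_graph:
  assumes "is_play D FN FP pA pD traj" and "valid_strategies V E lam D pA pD"
    and "traj k \<in> state_space V" and "\<not> absorbing D (traj k)"
    and "lam \<subseteq> V" and "E \<subseteq> V \<times> V"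
  shows "(traj k, traj (Suc k)) \<in> state_graph V E lam D FN FP"
proof -
  obtain a d where "a \<in> set_pmf (pA (traj k))" and "d \<in> set_pmf (pD (traj k))"
    and pos: "trans_prob FN FP (traj k) a d (traj (Suc k)) > 0"
    using assms(1,4) unfolding is_play_def by blast
  then have a: "a \<in> act_A E lam D (traj k)" and d: "d \<in> act_D E D (traj k)"
    using assms(2-4) unfolding valid_strategies_def by auto
  have "traj (Suc k) \<in> state_space V"
    using trans_prob_pos_target[OF pos] act_A_subset_state_space[OF assms(5,6)] a
    by (auto simp: state_space_def)
  then show ?thesis unfolding state_graph_def using assms(3) a d pos by blast
qed

lemma play_in_state_space:
  assumes "is_play D FN FP pA pD traj" and "valid_strategies V E lam D pA pD"
    and "lam \<subseteq> V" and "E \<subseteq> V \<times> V"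
  shows "traj k \<in> state_space V"
proof (induction k)
  case 0
  then show ?case using assms(1) by (simp add: is_play_def state_space_def)
next
  case (Suc k)
  show ?case
  proof (cases "absorbing D (traj k)")
    case True
    then show ?thesis using Suc assms(1) by (simp add: is_play_def)
  next
    case False
    then show ?thesis using play_step_in_state_graph[OF assms(1,2) Suc False assms(3,4)]
      by (simp add: state_graph_def)
  qed
qed

lemma card_non_absorbing_le:
  assumes "finite V"
  shows "card {s \<in> state_space V. \<not> absorbing D s} \<le> card V + 1"
proof -
  have "{s \<in> state_space V. \<not> absorbing D s} \<subseteq> insert V0 (Node ` V)"
    by (auto simp: state_space_def absorbing_def)
  then have "card {s \<in> state_space V. \<not> absorbing D s} \<le> card (insert V0 (Node ` V))"
    using assms by (intro card_mono) auto
  also have "\<dots> \<le> card V + 1"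
    using assms by (simp add: card_insert_if card_image inj_on_def)
  finally show ?thesis .
qed

lemma play_absorbed_within:
  assumes "finite V" and "lam \<subseteq> V" and "E \<subseteq> V \<times> V" and "acyclic E"
    and "valid_strategies V E lam D pA pD" and "is_play D FN FP pA pD traj"
  shows "\<exists>k \<le> card V + 1. absorbing D (traj k)"
proof (rule ccontr)
  define n where "n = card V + 1"
  define A where "A = {s \<in> state_space V. \<not> absorbing D s}"
  assume "\<not> (\<exists>k \<le> card V + 1. absorbing D (traj k))"
  then have alive: "traj k \<in> A" if "k \<le> n" for k
    using that play_in_state_space[OF assms(6,5,2,3)] by (auto simp: A_def n_def)
  have "\<forall>k < n. (traj k, traj (Suc k)) \<in> state_graph V E lam D FN FP"
    using alive play_step_in_state_graph[OF assms(6,5) _ _ assms(2,3)] by (simp add: A_def)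
  then have "inj_on traj {..n}"
    using inj_on_walk_if_acyclic acyclic_state_graph[OF assms(4)] by blast
  moreover have "finite A" using assms(1) by (simp add: A_def state_space_def)
  ultimately have "card {..n} \<le> card A"
    using alive by (intro card_inj_on_le) auto
  then show False
    using card_non_absorbing_le[OF assms(1), of D] by (simp add: A_def n_def)
qed

theorem theorem4:
  fixes V :: "'v set" and E :: "('v \<times> 'v) set" and lam D :: "'v set"
    and FN FP :: "'v \<Rightarrow> real"
    and pA :: "'v gstate \<Rightarrow> 'v gstate pmf" and pD :: "'v gstate \<Rightarrow> 'v option pmf"
  assumes "finite V" and "E \<subseteq> V \<times> V" and "lam \<subseteq> V" and "D \<subseteq> V"
    and "\<forall>v \<in> V. 0 < FN v \<and> FN v < 1" and "\<forall>v \<in> V. 0 < FP v \<and> FP v < 1"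
    and "acyclic E"
    and "valid_strategies V E lam D pA pD"
  shows "acyclic (state_graph V E lam D FN FP) \<and>
         (\<forall>traj. is_play D FN FP pA pD traj \<longrightarrow>
            (\<exists>k. absorbing D (traj k)) \<and> term_time D traj \<le> card V + 4)"
proof (intro conjI allI impI)
  show "acyclic (state_graph V E lam D FN FP)"
    using acyclic_state_graph[OF assms(7)] .
  fix traj assume "is_play D FN FP pA pD traj"
  then obtain k where k: "k \<le> card V + 1" "absorbing D (traj k)"
    using play_absorbed_within[OF assms(1,3,2,7,8)] by blast
  then show "\<exists>k. absorbing D (traj k)" by blast
  have "term_time D traj \<le> k"
    unfolding term_time_def using k(2) by (rule Least_le)
  then show "term_time D traj \<le> card V + 4" using k(1) by simp
qed

end
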